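(* Let $T\ge1$, let $\tau>0$ with $\tau<\frac{1}{4L}$, and let $(x_t)$ be generated from a deterministic $x_0$ by the randomized incremental proximal method $x_{t+1}=\operatorname{prox}_{\tau m g_{j_t}}(x_t-\tau\nabla f_{i_t}(x_t))$. Let $\epsilon'>0$ be arbitrary, $a=2\tau L(1+\epsilon')$ and $v=\left(1+\frac1{\epsilon'}\right)\sigma_*^2\tau$. Then for every $t\in\{0,\dots,T\}$ and every random vector $z_t$ measurable with respect to $\sigma(x_0,\dots,x_t)$, \[ \mathbb{E}_t\left[h(x_{t+1})-h(z_t)-a\,h(x_t)+a\,h^*\right]\le\frac{1}{2\tau}\mathbb{E}_t\left[\|x_t-z_t\|^2-\|x_{t+1}-z_t\|^2\right]+v+8\tau m^2L_g^2. \]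
   Context: Setting. Let $D$ be a probability distribution on an index set, and for each index $i$ let $f_i:\mathbb{R}^n\to\mathbb{R}$ be convex and differentiable with $L$-Lipschitz gradient ($L>0$). Let $f(x)=\mathbb{E}_{i\sim D}[f_i(x)]$ with $\mathbb{E}_{i\sim D}[\nabla f_i(x)]=\nabla f(x)$ for all $x$. Let $g=\sum_{j=1}^m g_j$ where each $g_j:\mathbb{R}^n\to\mathbb{R}$ is proper, convex, lower semicontinuous and $L_g$-Lipschitz. Let $h=f+g$, assume $X^*=\arg\min h\neq\emptyset$, $h^*=\min h$, and $\sigma_*^2:=\mathbb{E}_{i\sim D}\|\nabla f_i(x^* )\|^2<\infty$ for some $x^*\in X^*$. $\operatorname{prox}_{\lambda\phi}(y)=\arg\min_z\{\lambda\phi(z)+\tfrac12\|y-z\|^2\}$. At each iteration $i_t\sim D$ and $j_t$ uniform on $\{1,\dots,m\}$, independent of each other and of $x_0,\dots,x_t$. $\mathbb{E}_t$ is conditional expectation given $\sigma(x_0,\dots,x_t)$. *)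

theory Defs
  imports "HOL-Analysis.Analysis" "HOL-Probability.Probability"
begin

text \<open>For convex,
  finite-valued (hence continuous) phi the minimiser exists and is unique.\<close>
definition prox :: "('a::euclidean_space \<Rightarrow> real) \<Rightarrow> 'a \<Rightarrow> 'a" where
  "prox phi y = (SOME z. \<forall>w. phi z + (1/2) * (norm (y - z))\<^sup>2 \<le> phi w + (1/2) * (norm (y - w))\<^sup>2)"

text \<open>h = f + sum_{j=1}^m g_j (components g_j indexed by j < m).\<close>
definition hfun :: "('a \<Rightarrow> real) \<Rightarrow> (nat \<Rightarrow> 'a \<Rightarrow> real) \<Rightarrow> nat \<Rightarrow> 'a \<Rightarrow> real" where
  "hfun F g m x = F x + (\<Sum>j<m. g j x)"

definition ripm_step :: "('i \<Rightarrow> 'a::euclidean_space \<Rightarrow> 'a) \<Rightarrow> (nat \<Rightarrow> 'a \<Rightarrow> real) \<Rightarrow> nat \<Rightarrow> real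
    \<Rightarrow> 'a \<Rightarrow> 'i \<Rightarrow> nat \<Rightarrow> 'a" where
  "ripm_step df g m tau x i j = prox (\<lambda>z. tau * real m * g j z) (x - tau *\<^sub>R df i x)"

primrec ripm_iter :: "('i \<Rightarrow> 'a::euclidean_space \<Rightarrow> 'a) \<Rightarrow> (nat \<Rightarrow> 'a \<Rightarrow> real) \<Rightarrow> nat \<Rightarrow> real
    \<Rightarrow> 'a \<Rightarrow> (nat \<Rightarrow> 'i) \<Rightarrow> (nat \<Rightarrow> nat) \<Rightarrow> nat \<Rightarrow> 'a" where
  "ripm_iter df g m tau x0 is js 0 = x0"
| "ripm_iter df g m tau x0 is js (Suc t) =
     ripm_step df g m tau (ripm_iter df g m tau x0 is js t) (is t) (js t)"

end

theory Submission
  imports Defs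
begin

(* A step x+ = prox_{tau m g_j}(x - tau grad f_i(x)) is a proximal-gradient step on f + m g_j with a
   stochastic gradient. The three-point inequality of the prox, the descent lemma and convexity of f
   bound h(x+) - h(z) by (|x - z|^2 - |x+ - z|^2) / (2 tau), plus the gradient noise
   <grad f(x) - grad f_i(x), x+ - z>, the bias g - m g_j and a Lipschitz error 2 m Lg |x+ - x|.
   Because tau < 1/(4L), the leftover -|x+ - x|^2 / (2 tau) absorbs everything linear in |x+ - x|.
   Averaging over j cancels the bias; averaging over i leaves tau E|grad f(x) - grad f_i(x)|^2, at most
   tau E|grad f_i(x)|^2, which co-coercivity of grad f_i and Young's inequality bound by
   2L(1 + eps) Br(x) + (1 + 1/eps) sigma2 with the Bregman distance
   Br(x) = f(x) - f(xs) - <grad f(xs), x - xs> at the minimiser xs. Optimality of xs gives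
   Br(x) <= h(x) - h(xs). *)

section \<open>Smooth and convex functions\<close>

lemma directional_quotient_tendsto:
  fixes f :: "'a::real_inner \<Rightarrow> real"
  assumes "(f has_derivative (\<lambda>h. d \<bullet> h)) (at x)"
  shows "((\<lambda>s. (f (x + s *\<^sub>R v) - f x) / s) \<longlongrightarrow> d \<bullet> v) (at_right 0)"
proof -
  have "((\<lambda>s. x + s *\<^sub>R v) has_derivative (\<lambda>s. s *\<^sub>R v)) (at 0)"
    by (auto intro!: derivative_eq_intros)
  from has_derivative_compose[OF this, of f "\<lambda>h. d \<bullet> h"] assms
  have "((\<lambda>s. f (x + s *\<^sub>R v)) has_real_derivative d \<bullet> v) (at 0)"
    by (simp add: has_field_derivative_def mult_commute_abs)
  then have "((\<lambda>s. (f (x + s *\<^sub>R v) - f x) / s) \<longlongrightarrow> d \<bullet> v) (at 0)"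
    unfolding DERIV_def by simp
  then show ?thesis
    by (rule tendsto_mono[OF at_le[OF subset_UNIV]])
qed

lemma convex_on_gradient_inequality:
  fixes f :: "'a::real_inner \<Rightarrow> real"
  assumes "convex_on UNIV f" "(f has_derivative (\<lambda>h. d \<bullet> h)) (at x)"
  shows "f x + d \<bullet> (w - x) \<le> f w"
proof -
  have "d \<bullet> (w - x) \<le> f w - f x"
  proof (rule tendsto_upperbound[OF directional_quotient_tendsto[OF assms(2)]])
    show "\<forall>\<^sub>F s in at_right 0. (f (x + s *\<^sub>R (w - x)) - f x) / s \<le> f w - f x"
      using eventually_at_right_real[OF zero_less_one]
    proof eventually_elim
      case (elim s)
      have "f (x + s *\<^sub>R (w - x)) - f x \<le> s * (f w - f x)"
        using convex_onD[OF assms(1), of s x w] elim by (simp add: algebra_simps)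
      with elim show ?case by (simp add: pos_divide_le_eq mult.commute)
    qed
  qed simp
  then show ?thesis by simp
qed

lemma smooth_plus_convex_minimizer_ineq:
  fixes F G :: "'a::real_inner \<Rightarrow> real"
  assumes "(F has_derivative (\<lambda>h. d \<bullet> h)) (at x)" "convex_on UNIV G"
    and "\<And>y. F x + G x \<le> F y + G y"
  shows "G x - G w \<le> d \<bullet> (w - x)"
proof (rule tendsto_lowerbound[OF directional_quotient_tendsto[OF assms(1)]])
  show "\<forall>\<^sub>F s in at_right 0. G x - G w \<le> (F (x + s *\<^sub>R (w - x)) - F x) / s"
    using eventually_at_right_real[OF zero_less_one]
  proof eventually_elim
    case (elim s)
    have "G (x + s *\<^sub>R (w - x)) \<le> (1 - s) * G x + s * G w"
      using convex_onD[OF assms(2), of s x w] elim by (simp add: algebra_simps)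
    then have "s * (G x - G w) \<le> F (x + s *\<^sub>R (w - x)) - F x"
      using assms(3)[of "x + s *\<^sub>R (w - x)"] by (simp add: algebra_simps)
    with elim show ?case by (simp add: pos_le_divide_eq mult.commute)
  qed
qed simp

lemma convex_on_sum_functions:
  assumes "finite I" "convex S" "\<And>k. k \<in> I \<Longrightarrow> convex_on S (g k)"
  shows "convex_on S (\<lambda>x. \<Sum>k\<in>I. g k x)"
  using assms by (induction I rule: finite_induct) (auto simp: convex_on_const)

lemma descent_lemma:
  fixes f :: "'a::real_inner \<Rightarrow> real"
  assumes grad: "\<And>x. (f has_derivative (\<lambda>h. df x \<bullet> h)) (at x)"
    and lip: "\<And>x y. norm (df x - df y) \<le> L * norm (x - y)"
  shows "f u \<le> f x + df x \<bullet> (u - x) + L / 2 * (norm (u - x))\<^sup>2"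
proof -
  define v where "v = u - x"
  define \<phi> where "\<phi> s = f (x + s *\<^sub>R v) - s * (df x \<bullet> v) - L / 2 * s\<^sup>2 * (norm v)\<^sup>2" for s
  have \<phi>_deriv: "(\<phi> has_real_derivative (df (x + s *\<^sub>R v) - df x) \<bullet> v - L * s * (norm v)\<^sup>2) (at s)"
    for s
  proof -
    have "((\<lambda>s. x + s *\<^sub>R v) has_derivative (\<lambda>t. t *\<^sub>R v)) (at s)"
      by (auto intro!: derivative_eq_intros)
    from has_derivative_compose[OF this grad]
    have "((\<lambda>s. f (x + s *\<^sub>R v)) has_real_derivative df (x + s *\<^sub>R v) \<bullet> v) (at s)"
      by (simp add: has_field_derivative_def mult_commute_abs)
    then show ?thesis
      unfolding \<phi>_def by (auto intro!: derivative_eq_intros simp: inner_diff_left)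
  qed
  have slope: "(df (x + s *\<^sub>R v) - df x) \<bullet> v \<le> L * s * (norm v)\<^sup>2" if "0 \<le> s" for s
  proof -
    have "(df (x + s *\<^sub>R v) - df x) \<bullet> v \<le> norm (df (x + s *\<^sub>R v) - df x) * norm v"
      by (rule Cauchy_Schwarz_ineq2[THEN abs_le_D1])
    also have "\<dots> \<le> L * norm (s *\<^sub>R v) * norm v"
      using lip[of "x + s *\<^sub>R v" x] by (intro mult_right_mono) auto
    finally show ?thesis
      using that by (simp add: power2_eq_square mult.assoc)
  qed
  have "\<phi> 1 \<le> \<phi> 0"
  proof (rule DERIV_nonpos_imp_nonincreasing[of 0 1])
    fix s :: real
    assume "0 \<le> s" "s \<le> 1"
    then show "\<exists>y. (\<phi> has_real_derivative y) (at s) \<and> y \<le> 0"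
      using \<phi>_deriv[of s] slope[of s] by auto
  qed simp
  then show ?thesis
    by (simp add: \<phi>_def v_def)
qed

lemma cocoercivity:
  fixes f :: "'a::real_inner \<Rightarrow> real"
  assumes cvx: "convex_on UNIV f"
    and grad: "\<And>x. (f has_derivative (\<lambda>h. df x \<bullet> h)) (at x)"
    and lip: "\<And>x y. norm (df x - df y) \<le> L * norm (x - y)"
    and L: "L > 0"
  shows "(norm (df x - df y))\<^sup>2 \<le> 2 * L * (f x - f y - df y \<bullet> (x - y))"
proof -
  define d where "d = df x - df y"
  define w where "w = x - (1 / L) *\<^sub>R d"
  have "f y + df y \<bullet> (w - y) \<le> f w"
    by (rule convex_on_gradient_inequality[OF cvx grad])
  moreover have "f w \<le> f x + df x \<bullet> (w - x) + L / 2 * (norm (w - x))\<^sup>2"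
    by (rule descent_lemma[OF grad lip])
  moreover have "df x \<bullet> (w - x) - df y \<bullet> (w - y) = - (df y \<bullet> (x - y)) - (norm d)\<^sup>2 / L"
  proof -
    have "df x \<bullet> (w - x) - df y \<bullet> (w - y) = - (df y \<bullet> (x - y)) - (1 / L) * ((df x - df y) \<bullet> d)"
      by (simp add: w_def inner_diff_left inner_diff_right algebra_simps)
    then show ?thesis
      by (simp add: d_def power2_norm_eq_inner)
  qed
  moreover have "L / 2 * (norm (w - x))\<^sup>2 = ((norm d)\<^sup>2 / L) / 2"
    using L by (simp add: w_def power2_eq_square)
  ultimately have "((norm d)\<^sup>2 / L) / 2 \<le> f x - f y - df y \<bullet> (x - y)"
    by linarith
  then show ?thesis
    using L by (simp add: d_def field_simps)
qed

lemma norm_add_square_le_weighted: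
  fixes p q :: "'a::real_inner"
  assumes eps: "eps > 0"
  shows "(norm (p + q))\<^sup>2 \<le> (1 + eps) * (norm p)\<^sup>2 + (1 + 1 / eps) * (norm q)\<^sup>2"
proof -
  have "2 * (p \<bullet> q) \<le> 2 * (norm p * norm q)"
    using Cauchy_Schwarz_ineq2[THEN abs_le_D1, of p q] by simp
  also have "\<dots> \<le> eps * (norm p)\<^sup>2 + (norm q)\<^sup>2 / eps"
  proof -
    have "eps * (2 * (norm p * norm q)) \<le> eps * (eps * (norm p)\<^sup>2 + (norm q)\<^sup>2 / eps)"
      using eps sum_squares_ge_zero[of "eps * norm p - norm q" 0]
      by (simp add: algebra_simps power2_eq_square)
    then show ?thesis
      using eps by simp
  qed
  finally show ?thesis
    by (simp add: power2_norm_eq_inner inner_add_left inner_add_right inner_commute algebra_simps)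
qed

lemma absorb_into_quadratic:
  fixes tau L M w e :: real
  assumes "tau > 0" "4 * tau * L < 1"
  shows "w * e + 2 * M * e - (1 / (2 * tau) - L / 2) * e\<^sup>2 \<le> tau * w\<^sup>2 + 8 * tau * M\<^sup>2"
proof -
  have "(4 * tau * L) * e\<^sup>2 \<le> e\<^sup>2"
    using mult_right_mono[of "4 * tau * L" 1 "e\<^sup>2"] assms(2) by simp
  moreover have "0 \<le> (2 * tau * w - e)\<^sup>2" "0 \<le> (8 * tau * M - e)\<^sup>2"
    by simp_all
  ultimately have "8 * tau * (w * e + 2 * M * e - (1 / (2 * tau) - L / 2) * e\<^sup>2)
      \<le> 8 * tau * (tau * w\<^sup>2 + 8 * tau * M\<^sup>2)"
    using assms(1) by (simp add: algebra_simps power2_eq_square)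
  then show ?thesis
    using assms(1) by simp
qed

section \<open>The proximal operator\<close>

(* Outside cball y (2c + 1) the objective exceeds its value at y, so a minimiser on this compact
   ball is a global one, and the SOME in the definition of prox is not vacuous. *)
lemma prox_minimizes:
  fixes phi :: "'a::euclidean_space \<Rightarrow> real"
  assumes lip: "c-lipschitz_on UNIV phi"
  shows "phi (prox phi y) + 1 / 2 * (norm (y - prox phi y))\<^sup>2 \<le> phi w + 1 / 2 * (norm (y - w))\<^sup>2"
proof -
  define \<psi> where "\<psi> w = phi w + 1 / 2 * (norm (y - w))\<^sup>2" for w
  have c: "c \<ge> 0"
    using lip by (simp add: lipschitz_on_def)
  have cont: "continuous_on (cball y (2 * c + 1)) \<psi>"
    unfolding \<psi>_def
    by (intro continuous_intros continuous_on_subset[OF lipschitz_on_continuous_on[OF lip]]) auto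
  obtain u where u: "u \<in> cball y (2 * c + 1)" "\<And>w. w \<in> cball y (2 * c + 1) \<Longrightarrow> \<psi> u \<le> \<psi> w"
    using continuous_attains_inf[OF compact_cball _ cont] c by fastforce
  have "\<psi> u \<le> \<psi> w" for w
  proof (cases "w \<in> cball y (2 * c + 1)")
    case True
    then show ?thesis using u by blast
  next
    case False
    define r where "r = norm (y - w)"
    have r: "r \<ge> 2 * c"
      using False by (simp add: r_def dist_norm)
    have "dist (phi w) (phi y) \<le> c * dist w y"
      by (rule lipschitz_onD[OF lip]) auto
    then have "phi y - phi w \<le> c * r"
      by (simp add: dist_real_def r_def dist_norm norm_minus_commute)
    moreover have "0 \<le> r * (r - 2 * c)"
      using r c by simp
    ultimately have "\<psi> y \<le> \<psi> w"
      by (simp add: \<psi>_def r_def[symmetric] algebra_simps power2_eq_square)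
    moreover have "\<psi> u \<le> \<psi> y"
      using u c by simp
    ultimately show ?thesis by simp
  qed
  then have "\<exists>z. \<forall>w. phi z + 1 / 2 * (norm (y - z))\<^sup>2 \<le> phi w + 1 / 2 * (norm (y - w))\<^sup>2"
    unfolding \<psi>_def by blast
  from someI_ex[OF this] show ?thesis
    unfolding prox_def by blast
qed

lemma prox_variational_inequality:
  fixes phi :: "'a::euclidean_space \<Rightarrow> real"
  assumes lip: "c-lipschitz_on UNIV phi" and cvx: "convex_on UNIV phi"
  shows "(y - prox phi y) \<bullet> (w - prox phi y) \<le> phi w - phi (prox phi y)"
proof -
  define u where "u = prox phi y"
  have "((\<lambda>w. 1 / 2 * (norm (y - w))\<^sup>2) has_derivative (\<lambda>h. (u - y) \<bullet> h)) (at u)"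
    unfolding power2_norm_eq_inner
    by (auto intro!: derivative_eq_intros simp: inner_diff_left inner_diff_right inner_commute)
  moreover have "1 / 2 * (norm (y - u))\<^sup>2 + phi u \<le> 1 / 2 * (norm (y - v))\<^sup>2 + phi v" for v
    using prox_minimizes[OF lip, of y v] by (simp add: u_def)
  ultimately have "phi u - phi w \<le> (u - y) \<bullet> (w - u)"
    by (rule smooth_plus_convex_minimizer_ineq[OF _ cvx])
  then show ?thesis
    by (simp add: u_def[symmetric] inner_diff_left)
qed

lemma prox_nonexpansive:
  fixes phi :: "'a::euclidean_space \<Rightarrow> real"
  assumes lip: "c-lipschitz_on UNIV phi" and cvx: "convex_on UNIV phi"
  shows "norm (prox phi y1 - prox phi y2) \<le> norm (y1 - y2)"
proof -
  define u1 where "u1 = prox phi y1"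
  define u2 where "u2 = prox phi y2"
  have "(y1 - u1) \<bullet> (u2 - u1) + (y2 - u2) \<bullet> (u1 - u2) \<le> 0"
    using prox_variational_inequality[OF lip cvx, of y1 u2] prox_variational_inequality[OF lip cvx, of y2 u1]
    by (simp add: u1_def u2_def)
  moreover have "(y1 - u1) \<bullet> (u2 - u1) + (y2 - u2) \<bullet> (u1 - u2) = ((u1 - u2) - (y1 - y2)) \<bullet> (u1 - u2)"
    by (simp add: inner_diff_left inner_diff_right)
  ultimately have "(norm (u1 - u2))\<^sup>2 \<le> (y1 - y2) \<bullet> (u1 - u2)"
    by (simp add: inner_diff_left power2_norm_eq_inner)
  also have "\<dots> \<le> norm (y1 - y2) * norm (u1 - u2)"
    by (rule Cauchy_Schwarz_ineq2[THEN abs_le_D1])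
  finally show ?thesis
    unfolding u1_def[symmetric] u2_def[symmetric]
    by (metis le_less mult_le_cancel_right_pos norm_ge_zero not_le power2_eq_square)
qed

lemma prox_gradient_three_point:
  fixes psi :: "'a::euclidean_space \<Rightarrow> real" and x d z :: 'a
  assumes lip: "c-lipschitz_on UNIV psi" and cvx: "convex_on UNIV psi" and tau: "tau > 0"
  defines "u \<equiv> prox (\<lambda>w. tau * psi w) (x - tau *\<^sub>R d)"
  shows "psi u \<le> psi z + ((norm (x - z))\<^sup>2 - (norm (u - x))\<^sup>2 - (norm (u - z))\<^sup>2) / (2 * tau)
    - d \<bullet> (u - z)"
proof -
  define P where "P = (x - u) \<bullet> (z - u)"
  have "(tau * c)-lipschitz_on UNIV (\<lambda>w. tau * psi w)"
    using lipschitz_on_cmult_real_nonneg[OF lip, of tau] tau by simp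
  from prox_variational_inequality[OF this convex_on_cmul[OF _ cvx], of "x - tau *\<^sub>R d" z] tau
  have "(x - tau *\<^sub>R d - u) \<bullet> (z - u) \<le> tau * psi z - tau * psi u"
    by (simp add: u_def)
  moreover have "(x - tau *\<^sub>R d - u) \<bullet> (z - u) = P + tau * (d \<bullet> (u - z))"
    by (simp add: P_def inner_diff_left inner_diff_right algebra_simps)
  moreover have "tau * (psi z + ((norm (x - z))\<^sup>2 - (norm (u - x))\<^sup>2 - (norm (u - z))\<^sup>2) / (2 * tau)
      - d \<bullet> (u - z)) = tau * psi z - P - tau * (d \<bullet> (u - z))"
  proof -
    have "(norm (x - z))\<^sup>2 = (norm ((x - u) - (z - u)))\<^sup>2"
      by simp
    then have P_eq: "P = ((norm (u - x))\<^sup>2 + (norm (u - z))\<^sup>2 - (norm (x - z))\<^sup>2) / 2"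
      by (simp add: P_def power2_norm_eq_inner inner_diff_left inner_diff_right inner_commute)
    show ?thesis
      unfolding P_eq using tau by (simp add: field_simps)
  qed
  ultimately have "tau * psi u \<le> tau * (psi z + ((norm (x - z))\<^sup>2 - (norm (u - x))\<^sup>2 - (norm (u - z))\<^sup>2) / (2 * tau)
      - d \<bullet> (u - z))"
    by linarith
  then show ?thesis
    using tau by simp
qed

section \<open>Integration\<close>

lemma integrable_between:
  fixes f l u :: "'a \<Rightarrow> real"
  assumes "f \<in> borel_measurable M" "integrable M l" "integrable M u"
    and "\<And>x. l x \<le> f x" "\<And>x. f x \<le> u x"
  shows "integrable M f"
proof (rule Bochner_Integration.integrable_bound[where f = "\<lambda>x. \<bar>l x\<bar> + \<bar>u x\<bar>"])
  have "\<bar>f x\<bar> \<le> \<bar>l x\<bar> + \<bar>u x\<bar>" for x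
    using assms(4,5)[of x] by (smt (verit))
  then show "AE x in M. norm (f x) \<le> norm (\<bar>l x\<bar> + \<bar>u x\<bar>)"
    by simp
qed (use assms(1-3) in auto)

(* A non-integrable function has Bochner integral 0, so the integrability of A and B has to be
   derived; the one-sided bounds lo and hi provide it. *)
lemma (in prob_space) integral_le_affine_of_bounds:
  fixes A B R :: "'a \<Rightarrow> real"
  assumes "A \<in> borel_measurable M" "B \<in> borel_measurable M" "integrable M R" "c > 0"
    and "\<And>x. lo \<le> A x" "\<And>x. B x \<le> hi" "\<And>x. A x \<le> c * B x + R x + K"
  shows "(\<integral>x. A x \<partial>M) \<le> c * (\<integral>x. B x \<partial>M) + (\<integral>x. R x \<partial>M) + K"
proof -
  have A_upper: "A x \<le> c * hi + R x + K" for x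
    using assms(4) assms(6,7)[of x] by (smt (verit) mult_left_mono)
  have int_A: "integrable M A"
    by (rule integrable_between[OF assms(1) _ _ assms(5) A_upper]) (use assms(3) in auto)
  have B_lower: "(A x - R x - K) / c \<le> B x" for x
    using assms(4) assms(7)[of x] by (simp add: pos_divide_le_eq mult.commute)
  have int_B: "integrable M B"
    by (rule integrable_between[OF assms(2) _ _ B_lower assms(6)]) (use assms(3) int_A in auto)
  have "(\<integral>x. A x \<partial>M) \<le> (\<integral>x. c * B x + R x + K \<partial>M)"
    using assms(3) int_A int_B by (intro integral_mono assms(7)) auto
  also have "\<dots> = c * (\<integral>x. B x \<partial>M) + (\<integral>x. R x \<partial>M) + K"
    using assms(3) int_B by (simp add: prob_space)
  finally show ?thesis .
qed

lemma (in prob_space) integral_norm_mean_diff_square: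
  fixes X :: "'a \<Rightarrow> 'b::euclidean_space"
  assumes "integrable M X" "integrable M (\<lambda>x. (norm (X x))\<^sup>2)"
  shows "integrable M (\<lambda>x. (norm (expectation X - X x))\<^sup>2)"
    and "(\<integral>x. (norm (expectation X - X x))\<^sup>2 \<partial>M) = (\<integral>x. (norm (X x))\<^sup>2 \<partial>M) - (norm (expectation X))\<^sup>2"
proof -
  have expand: "(norm (expectation X - X x))\<^sup>2
      = (norm (expectation X))\<^sup>2 - 2 * (expectation X \<bullet> X x) + (norm (X x))\<^sup>2" for x
    by (simp add: power2_norm_eq_inner inner_diff_left inner_diff_right inner_commute)
  show "integrable M (\<lambda>x. (norm (expectation X - X x))\<^sup>2)"
    unfolding expand using assms by auto
  show "(\<integral>x. (norm (expectation X - X x))\<^sup>2 \<partial>M) = (\<integral>x. (norm (X x))\<^sup>2 \<partial>M) - (norm (expectation X))\<^sup>2"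
    unfolding expand using assms by (simp add: prob_space power2_norm_eq_inner)
qed

section \<open>One step of the randomized incremental proximal method\<close>

locale stochastic_composite = prob_space D
  for D :: "'i measure" +
  fixes f :: "'i \<Rightarrow> 'a::euclidean_space \<Rightarrow> real" and df :: "'i \<Rightarrow> 'a \<Rightarrow> 'a"
    and F :: "'a \<Rightarrow> real" and dF :: "'a \<Rightarrow> 'a"
    and g :: "nat \<Rightarrow> 'a \<Rightarrow> real" and m :: nat and L Lg :: real
  assumes L_pos: "L > 0"
    and f_convex: "\<And>i. convex_on UNIV (f i)"
    and f_grad: "\<And>i x. (f i has_derivative (\<lambda>h. df i x \<bullet> h)) (at x)"
    and f_lip: "\<And>i x y. norm (df i x - df i y) \<le> L * norm (x - y)"
    and F_mean: "\<And>x. integrable D (\<lambda>i. f i x) \<and> F x = (\<integral>i. f i x \<partial>D)"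
    and F_grad: "\<And>x. (F has_derivative (\<lambda>h. dF x \<bullet> h)) (at x)"
    and dF_mean: "\<And>x. integrable D (\<lambda>i. df i x) \<and> (\<integral>i. df i x \<partial>D) = dF x"
    and m_pos: "m \<ge> 1"
    and g_convex: "\<And>j. j < m \<Longrightarrow> convex_on UNIV (g j)"
    and g_lip: "\<And>j. j < m \<Longrightarrow> Lg-lipschitz_on UNIV (g j)"
begin

definition g_sum :: "'a \<Rightarrow> real" where
  "g_sum w = (\<Sum>k<m. g k w)"

lemma hfun_eq: "hfun F g m w = F w + g_sum w"
  by (simp add: hfun_def g_sum_def)

lemma integrable_f [simp]: "integrable D (\<lambda>i. f i x)"
  and integral_f: "(\<integral>i. f i x \<partial>D) = F x"
  using F_mean by auto

lemma integrable_df [simp]: "integrable D (\<lambda>i. df i x)"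
  and integral_df: "(\<integral>i. df i x \<partial>D) = dF x"
  using dF_mean by auto

lemma F_gradient_inequality: "F p + dF p \<bullet> (w - p) \<le> F w"
proof -
  have "(\<integral>i. f i p + df i p \<bullet> (w - p) \<partial>D) \<le> (\<integral>i. f i w \<partial>D)"
    by (intro integral_mono convex_on_gradient_inequality[OF f_convex f_grad]) auto
  then show ?thesis
    by (simp add: integral_f integral_df)
qed

lemma F_descent: "F q \<le> F p + dF p \<bullet> (q - p) + L / 2 * (norm (q - p))\<^sup>2"
proof -
  have "(\<integral>i. f i q \<partial>D) \<le> (\<integral>i. f i p + df i p \<bullet> (q - p) + L / 2 * (norm (q - p))\<^sup>2 \<partial>D)"
    by (intro integral_mono descent_lemma[OF f_grad f_lip]) auto
  then show ?thesis
    by (simp add: integral_f integral_df prob_space)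
qed

lemma bregman_le_objective_gap:
  assumes xs_min: "\<And>y. hfun F g m xs \<le> hfun F g m y"
  shows "F x - F xs - dF xs \<bullet> (x - xs) \<le> hfun F g m x - hfun F g m xs"
proof -
  have "convex_on UNIV g_sum"
    unfolding g_sum_def[abs_def] by (intro convex_on_sum_functions g_convex) auto
  then have "g_sum xs - g_sum x \<le> dF xs \<bullet> (x - xs)"
    by (rule smooth_plus_convex_minimizer_ineq[OF F_grad]) (use xs_min in \<open>simp add: hfun_eq\<close>)
  then show ?thesis
    by (simp add: hfun_eq)
qed

lemma g_diff_le: "j < m \<Longrightarrow> g j x - g j u \<le> Lg * norm (u - x)"
  using lipschitz_onD[OF g_lip, of j x u] by (simp add: dist_real_def dist_norm norm_minus_commute)

lemma g_sum_diff_le: "g_sum u - g_sum x \<le> m * Lg * norm (u - x)"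
proof -
  have "g_sum u - g_sum x = (\<Sum>k<m. g k u - g k x)"
    by (simp add: g_sum_def sum_subtractf)
  also have "\<dots> \<le> (\<Sum>k<m. Lg * norm (u - x))"
    using g_diff_le[of _ u x] by (intro sum_mono) (simp add: norm_minus_commute)
  finally show ?thesis
    by simp
qed

lemma prox_step_bound:
  fixes x z :: 'a and i :: 'i
  assumes j: "j < m" and tau: "tau > 0" "4 * tau * L < 1"
  defines "u \<equiv> ripm_step df g m tau x i j"
  shows "hfun F g m u - hfun F g m z \<le> ((norm (x - z))\<^sup>2 - (norm (u - z))\<^sup>2) / (2 * tau)
      + tau * (norm (dF x - df i x))\<^sup>2 + (dF x - df i x) \<bullet> (x - z)
      + (g_sum x - m * g j x) - (g_sum z - m * g j z) + 8 * tau * (m * Lg)\<^sup>2"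
proof -
  define e where "e = norm (u - x)"
  define w where "w = dF x - df i x"
  have "(m * Lg)-lipschitz_on UNIV (\<lambda>v. m * g j v)"
    by (rule lipschitz_on_cmult_real_nonneg[OF g_lip[OF j]]) simp
  from prox_gradient_three_point[OF this convex_on_cmul[OF _ g_convex[OF j]] tau(1), of x "df i x" z]
  have three_point: "m * g j u \<le> m * g j z + ((norm (x - z))\<^sup>2 - e\<^sup>2 - (norm (u - z))\<^sup>2) / (2 * tau)
      - df i x \<bullet> (u - z)"
    by (simp add: u_def e_def ripm_step_def mult.assoc)
  have smooth: "F u - F z \<le> dF x \<bullet> (u - z) + L / 2 * e\<^sup>2"
    using F_descent[of u x] F_gradient_inequality[of x z] by (simp add: e_def inner_diff_right)
  have lipschitz: "g_sum u - m * g j u \<le> g_sum x - m * g j x + 2 * (m * Lg) * e"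
    using g_sum_diff_le[of u x] mult_left_mono[OF g_diff_le[OF j, of x u], of m] by (simp add: e_def algebra_simps)
  have "w \<bullet> (u - x) \<le> norm w * e"
    unfolding e_def by (rule Cauchy_Schwarz_ineq2[THEN abs_le_D1])
  moreover have "norm w * e + 2 * (m * Lg) * e - (1 / (2 * tau) - L / 2) * e\<^sup>2 \<le> tau * (norm w)\<^sup>2 + 8 * tau * (m * Lg)\<^sup>2"
    by (rule absorb_into_quadratic[OF tau])
  moreover have "dF x \<bullet> (u - z) - df i x \<bullet> (u - z) = w \<bullet> (u - x) + w \<bullet> (x - z)"
    by (simp add: w_def inner_diff_left inner_diff_right)
  moreover have "((norm (x - z))\<^sup>2 - e\<^sup>2 - (norm (u - z))\<^sup>2) / (2 * tau)
      = ((norm (x - z))\<^sup>2 - (norm (u - z))\<^sup>2) / (2 * tau) - (1 / (2 * tau) - L / 2) * e\<^sup>2 - L / 2 * e\<^sup>2"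
    using tau(1) by (simp add: field_simps)
  ultimately show ?thesis
    using three_point smooth lipschitz unfolding hfun_eq w_def by linarith
qed

lemma averaged_step_bound:
  fixes x z :: 'a and i :: 'i
  assumes tau: "tau > 0" "4 * tau * L < 1"
  defines "u \<equiv> ripm_step df g m tau x i"
  shows "(\<Sum>j<m. hfun F g m (u j) - hfun F g m z) / m
    \<le> 1 / (2 * tau) * ((\<Sum>j<m. (norm (x - z))\<^sup>2 - (norm (u j - z))\<^sup>2) / m)
      + (tau * (norm (dF x - df i x))\<^sup>2 + (dF x - df i x) \<bullet> (x - z) + 8 * tau * (m * Lg)\<^sup>2)"
    (is "_ \<le> 1 / (2 * tau) * (?B / m) + ?N")
proof -
  have m: "real m > 0"
    using m_pos by simp
  have cancel: "(\<Sum>j<m. (g_sum x - m * g j x) - (g_sum z - m * g j z)) = 0"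
    by (simp add: g_sum_def sum_subtractf sum_distrib_left[symmetric])
  have "(\<Sum>j<m. hfun F g m (u j) - hfun F g m z)
      \<le> (\<Sum>j<m. ((norm (x - z))\<^sup>2 - (norm (u j - z))\<^sup>2) / (2 * tau) + ?N
        + ((g_sum x - m * g j x) - (g_sum z - m * g j z)))"
  proof (rule sum_mono)
    fix j
    assume "j \<in> {..<m}"
    then show "hfun F g m (u j) - hfun F g m z \<le> ((norm (x - z))\<^sup>2 - (norm (u j - z))\<^sup>2) / (2 * tau) + ?N
        + ((g_sum x - m * g j x) - (g_sum z - m * g j z))"
      using prox_step_bound[OF _ tau, of j x i z] unfolding u_def by simp
  qed
  also have "\<dots> = ?B / (2 * tau) + m * ?N"
    by (simp add: sum.distrib cancel sum_divide_distrib[symmetric])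
  finally show ?thesis
    using m by (simp add: field_simps)
qed

lemma measurable_ripm_step:
  assumes "j < m" "tau > 0"
  shows "(\<lambda>i. ripm_step df g m tau x i j) \<in> borel_measurable D"
proof -
  have lip: "(tau * m * Lg)-lipschitz_on UNIV (\<lambda>v. tau * m * g j v)"
    using assms by (intro lipschitz_on_cmult_real_nonneg g_lip) auto
  have cvx: "convex_on UNIV (\<lambda>v. tau * m * g j v)"
    using assms by (intro convex_on_cmul g_convex) auto
  have "1-lipschitz_on UNIV (prox (\<lambda>v. tau * m * g j v))"
    by (intro lipschitz_onI) (auto simp: dist_norm intro: prox_nonexpansive[OF lip cvx])
  then have "prox (\<lambda>v. tau * m * g j v) \<in> borel_measurable borel"
    by (intro borel_measurable_continuous_onI lipschitz_on_continuous_on)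
  moreover have "(\<lambda>i. x - tau *\<^sub>R df i x) \<in> borel_measurable D"
    using borel_measurable_integrable[OF integrable_df] by measurable
  ultimately show ?thesis
    unfolding ripm_step_def by (rule measurable_compose[rotated])
qed

lemma continuous_on_hfun: "continuous_on UNIV (hfun F g m)"
proof -
  have "continuous_on UNIV F"
    by (intro continuous_at_imp_continuous_on ballI has_derivative_continuous[OF F_grad])
  moreover have "continuous_on UNIV (g k)" if "k < m" for k
    by (rule lipschitz_on_continuous_on[OF g_lip[OF that]])
  ultimately show ?thesis
    unfolding hfun_def[abs_def] by (intro continuous_intros) auto
qed

lemma gradient_second_moment_bound:
  assumes eps: "eps > 0" and sigma_fin: "integrable D (\<lambda>i. (norm (df i xs))\<^sup>2)"
  shows "integrable D (\<lambda>i. (norm (df i x))\<^sup>2)"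
    and "(\<integral>i. (norm (df i x))\<^sup>2 \<partial>D)
      \<le> 2 * L * (1 + eps) * (F x - F xs - dF xs \<bullet> (x - xs)) + (1 + 1 / eps) * (\<integral>i. (norm (df i xs))\<^sup>2 \<partial>D)"
proof -
  define U where "U i = 2 * L * (1 + eps) * (f i x - f i xs - df i xs \<bullet> (x - xs))
    + (1 + 1 / eps) * (norm (df i xs))\<^sup>2" for i
  have U_bound: "(norm (df i x))\<^sup>2 \<le> U i" for i
  proof -
    have "(norm (df i x))\<^sup>2 \<le> (1 + eps) * (norm (df i x - df i xs))\<^sup>2 + (1 + 1 / eps) * (norm (df i xs))\<^sup>2"
      using norm_add_square_le_weighted[OF eps, of "df i x - df i xs" "df i xs"] by simp
    also have "\<dots> \<le> U i"
      using mult_left_mono[OF cocoercivity[OF f_convex f_grad f_lip L_pos, of i x xs], of "1 + eps"] eps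
      by (simp add: U_def)
    finally show ?thesis .
  qed
  have int_U: "integrable D U"
    unfolding U_def using sigma_fin by auto
  have "(\<lambda>i. (norm (df i x))\<^sup>2) \<in> borel_measurable D"
    using borel_measurable_integrable[OF integrable_df] by measurable
  then show int_df2: "integrable D (\<lambda>i. (norm (df i x))\<^sup>2)"
    by (rule integrable_between[OF _ integrable_const[of 0] int_U _ U_bound]) auto
  have "(\<integral>i. (norm (df i x))\<^sup>2 \<partial>D) \<le> (\<integral>i. U i \<partial>D)"
    by (intro integral_mono int_df2 int_U U_bound)
  also have "\<dots> = 2 * L * (1 + eps) * (F x - F xs - dF xs \<bullet> (x - xs))
      + (1 + 1 / eps) * (\<integral>i. (norm (df i xs))\<^sup>2 \<partial>D)"
    unfolding U_def using sigma_fin by (simp add: integral_f integral_df)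
  finally show "(\<integral>i. (norm (df i x))\<^sup>2 \<partial>D)
      \<le> 2 * L * (1 + eps) * (F x - F xs - dF xs \<bullet> (x - xs)) + (1 + 1 / eps) * (\<integral>i. (norm (df i xs))\<^sup>2 \<partial>D)" .
qed

lemma gradient_noise_bound:
  assumes "integrable D (\<lambda>i. (norm (df i x))\<^sup>2)" "tau \<ge> 0"
  shows "integrable D (\<lambda>i. tau * (norm (dF x - df i x))\<^sup>2 + (dF x - df i x) \<bullet> (x - z))"
    and "(\<integral>i. tau * (norm (dF x - df i x))\<^sup>2 + (dF x - df i x) \<bullet> (x - z) \<partial>D)
      \<le> tau * (\<integral>i. (norm (df i x))\<^sup>2 \<partial>D)"
proof -
  note variance = integral_norm_mean_diff_square[OF integrable_df assms(1), unfolded integral_df]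
  show "integrable D (\<lambda>i. tau * (norm (dF x - df i x))\<^sup>2 + (dF x - df i x) \<bullet> (x - z))"
    using variance(1) by auto
  have "(\<integral>i. tau * (norm (dF x - df i x))\<^sup>2 + (dF x - df i x) \<bullet> (x - z) \<partial>D)
      = tau * ((\<integral>i. (norm (df i x))\<^sup>2 \<partial>D) - (norm (dF x))\<^sup>2)"
    using variance by (simp add: integral_df prob_space inner_diff_left)
  also have "\<dots> \<le> tau * (\<integral>i. (norm (df i x))\<^sup>2 \<partial>D)"
    using assms(2) by (simp add: mult_left_mono)
  finally show "(\<integral>i. tau * (norm (dF x - df i x))\<^sup>2 + (dF x - df i x) \<bullet> (x - z) \<partial>D)
      \<le> tau * (\<integral>i. (norm (df i x))\<^sup>2 \<partial>D)" .
qed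

lemma gradient_noise_le_objective_gap:
  fixes x z xs :: 'a
  assumes xs_min: "\<And>y. hfun F g m xs \<le> hfun F g m y"
    and sigma_fin: "integrable D (\<lambda>i. (norm (df i xs))\<^sup>2)"
    and tau: "tau \<ge> 0" and eps: "eps > 0"
  shows "integrable D (\<lambda>i. tau * (norm (dF x - df i x))\<^sup>2 + (dF x - df i x) \<bullet> (x - z))"
    and "(\<integral>i. tau * (norm (dF x - df i x))\<^sup>2 + (dF x - df i x) \<bullet> (x - z) \<partial>D)
      \<le> 2 * tau * L * (1 + eps) * (hfun F g m x - hfun F g m xs)
        + (1 + 1 / eps) * (\<integral>i. (norm (df i xs))\<^sup>2 \<partial>D) * tau"
proof -
  note noise = gradient_noise_bound[OF gradient_second_moment_bound(1)[OF eps sigma_fin] tau, of x z]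
  show "integrable D (\<lambda>i. tau * (norm (dF x - df i x))\<^sup>2 + (dF x - df i x) \<bullet> (x - z))"
    by (rule noise(1))
  have "(\<integral>i. tau * (norm (dF x - df i x))\<^sup>2 + (dF x - df i x) \<bullet> (x - z) \<partial>D)
      \<le> tau * (2 * L * (1 + eps) * (F x - F xs - dF xs \<bullet> (x - xs))
        + (1 + 1 / eps) * (\<integral>i. (norm (df i xs))\<^sup>2 \<partial>D))"
    using noise(2) mult_left_mono[OF gradient_second_moment_bound(2)[OF eps sigma_fin, of x] tau]
    by linarith
  also have "\<dots> \<le> 2 * tau * L * (1 + eps) * (hfun F g m x - hfun F g m xs)
      + (1 + 1 / eps) * (\<integral>i. (norm (df i xs))\<^sup>2 \<partial>D) * tau"
    using mult_left_mono[OF bregman_le_objective_gap[OF xs_min, of x], of "2 * tau * L * (1 + eps)"]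
      tau eps L_pos
    by (simp add: algebra_simps)
  finally show "(\<integral>i. tau * (norm (dF x - df i x))\<^sup>2 + (dF x - df i x) \<bullet> (x - z) \<partial>D)
      \<le> 2 * tau * L * (1 + eps) * (hfun F g m x - hfun F g m xs)
        + (1 + 1 / eps) * (\<integral>i. (norm (df i xs))\<^sup>2 \<partial>D) * tau" .
qed

lemma expected_step_bound:
  fixes x z xs :: 'a
  assumes xs_min: "\<And>y. hfun F g m xs \<le> hfun F g m y"
    and sigma_fin: "integrable D (\<lambda>i. (norm (df i xs))\<^sup>2)"
    and tau: "tau > 0" "4 * tau * L < 1" and eps: "eps > 0"
  defines "a \<equiv> 2 * tau * L * (1 + eps)"
    and "v \<equiv> (1 + 1 / eps) * (\<integral>i. (norm (df i xs))\<^sup>2 \<partial>D) * tau"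
    and "u \<equiv> ripm_step df g m tau x"
  shows "(\<integral>i. (\<Sum>j<m. hfun F g m (u i j) - hfun F g m z - a * hfun F g m x + a * hfun F g m xs) / m \<partial>D)
    \<le> 1 / (2 * tau) * (\<integral>i. (\<Sum>j<m. (norm (x - z))\<^sup>2 - (norm (u i j - z))\<^sup>2) / m \<partial>D)
      + v + 8 * tau * (real m)\<^sup>2 * Lg\<^sup>2"
proof -
  let ?h = "hfun F g m"
  define A where "A i = (\<Sum>j<m. ?h (u i j) - ?h z - a * ?h x + a * ?h xs) / m" for i
  define B where "B i = (\<Sum>j<m. (norm (x - z))\<^sup>2 - (norm (u i j - z))\<^sup>2) / m" for i
  define R where "R i = tau * (norm (dF x - df i x))\<^sup>2 + (dF x - df i x) \<bullet> (x - z)" for i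
  note noise = gradient_noise_le_objective_gap[OF xs_min sigma_fin less_imp_le[OF tau(1)] eps,
      of x z, folded R_def a_def v_def]
  have m: "real m > 0"
    using m_pos by simp
  have "A i = (\<Sum>j<m. ?h (u i j) - ?h z) / m - a * ?h x + a * ?h xs" for i
    using m by (simp add: A_def sum.distrib sum_subtractf field_simps)
  then have A_le: "A i \<le> 1 / (2 * tau) * B i + R i + (8 * tau * (m * Lg)\<^sup>2 - a * ?h x + a * ?h xs)" for i
    using averaged_step_bound[OF tau, of x i z] by (simp add: B_def R_def u_def)
  have A_ge: "?h xs - ?h z - a * ?h x + a * ?h xs \<le> A i" for i
    using sum_bounded_below[of "{..<m}" "?h xs - ?h z - a * ?h x + a * ?h xs"
        "\<lambda>j. ?h (u i j) - ?h z - a * ?h x + a * ?h xs"] xs_min m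
    by (simp add: A_def pos_le_divide_eq mult.commute)
  have B_le: "B i \<le> (norm (x - z))\<^sup>2" for i
    using sum_bounded_above[of "{..<m}" "\<lambda>j. (norm (x - z))\<^sup>2 - (norm (u i j - z))\<^sup>2" "(norm (x - z))\<^sup>2"] m
    by (simp add: B_def pos_divide_le_eq mult.commute)
  have "(\<lambda>i. ?h (u i j)) \<in> borel_measurable D" "(\<lambda>i. (norm (u i j - z))\<^sup>2) \<in> borel_measurable D"
    if "j < m" for j
    using measurable_ripm_step[OF that tau(1)] borel_measurable_continuous_onI[OF continuous_on_hfun]
    unfolding u_def by measurable
  then have meas: "A \<in> borel_measurable D" "B \<in> borel_measurable D"
    unfolding A_def[abs_def] B_def[abs_def] by (auto intro!: borel_measurable_sum borel_measurable_divide)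
  have "(\<integral>i. A i \<partial>D) \<le> 1 / (2 * tau) * (\<integral>i. B i \<partial>D) + (\<integral>i. R i \<partial>D)
      + (8 * tau * (m * Lg)\<^sup>2 - a * ?h x + a * ?h xs)"
    using tau(1) by (intro integral_le_affine_of_bounds[OF meas noise(1) _ A_ge B_le A_le]) auto
  with noise(2) show ?thesis
    by (simp add: A_def B_def power_mult_distrib algebra_simps)
qed

end

theorem lemma4p2:
  fixes D :: "'i measure"
    and f :: "'i \<Rightarrow> 'a::euclidean_space \<Rightarrow> real" and df :: "'i \<Rightarrow> 'a \<Rightarrow> 'a"
    and F :: "'a \<Rightarrow> real" and dF :: "'a \<Rightarrow> 'a"
    and g :: "nat \<Rightarrow> 'a \<Rightarrow> real" and m :: nat
    and L Lg tau eps :: real and T t :: nat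
    and x0 xs z :: 'a and "is" :: "nat \<Rightarrow> 'i" and js :: "nat \<Rightarrow> nat"
  assumes D: "prob_space D"
    and Lpos: "L > 0"
    and f_convex: "\<And>i. convex_on UNIV (f i)"
    and f_grad: "\<And>i x. (f i has_derivative (\<lambda>h. df i x \<bullet> h)) (at x)"
    and f_lip: "\<And>i x y. norm (df i x - df i y) \<le> L * norm (x - y)"
    and F_mean: "\<And>x. integrable D (\<lambda>i. f i x) \<and> F x = (\<integral>i. f i x \<partial>D)"
    and F_grad: "\<And>x. (F has_derivative (\<lambda>h. dF x \<bullet> h)) (at x)"
    and dF_mean: "\<And>x. integrable D (\<lambda>i. df i x) \<and> (\<integral>i. df i x \<partial>D) = dF x"
    and m_pos: "m \<ge> 1"
    and g_convex: "\<And>j. j < m \<Longrightarrow> convex_on UNIV (g j)"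
    and g_lip: "\<And>j. j < m \<Longrightarrow> Lg-lipschitz_on UNIV (g j)"
    and xs_min: "\<And>y. hfun F g m xs \<le> hfun F g m y"
    and sigma_fin: "integrable D (\<lambda>i. (norm (df i xs))\<^sup>2)"
    and T: "T \<ge> 1" and t: "t \<le> T"
    and tau: "tau > 0" "tau < 1 / (4 * L)"
    and eps: "eps > 0"
  shows
    "let h = hfun F g m;
         hstar = h xs;
         sigma2 = (\<integral>i. (norm (df i xs))\<^sup>2 \<partial>D);
         a = 2 * tau * L * (1 + eps);
         v = (1 + 1 / eps) * sigma2 * tau;
         x = ripm_iter df g m tau x0 is js t;
         step = ripm_step df g m tau x
     in (\<integral>i. (\<Sum>j<m. h (step i j) - h z - a * h x + a * hstar) / real m \<partial>D)
        \<le> 1 / (2 * tau) * (\<integral>i. (\<Sum>j<m. (norm (x - z))\<^sup>2 - (norm (step i j - z))\<^sup>2) / real m \<partial>D)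
           + v + 8 * tau * (real m)\<^sup>2 * Lg\<^sup>2"
proof -
  interpret stochastic_composite D f df F dF g m L Lg
    by (intro stochastic_composite.intro stochastic_composite_axioms.intro D) (use assms in auto)
  have "4 * tau * L < 1"
    using tau Lpos by (simp add: field_simps)
  \<comment> \<open>T and t are irrelevant: the bound holds at every point, in particular at the iterate x_t.\<close>
  from expected_step_bound[OF xs_min sigma_fin tau(1) this eps, of "ripm_iter df g m tau x0 is js t" z]
  show ?thesis
    unfolding Let_def by simp
qed

end
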